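(* Let $q,d\geq 2$ be integers and let $\psi\in\mathbb{Z}$, $\psi\neq 0$. Then for every $\theta,x\in\mathbb{Z}$, the natural density of the set $\{n\in\mathbb{N}: \psi w_q(n)+\theta n+x\equiv 0\pmod d\}$ exists and equals $$\begin{cases}\frac{1}{d}\gcd(\psi,\theta,d) & \text{if } \gcd(\psi,\theta,d)\mid\gcd(x,d),\\ 0 & \text{otherwise.}\end{cases}$$
   Context: For an integer $q\geq 2$ and $n\in\mathbb{N}$: $v_q(0)=0$ and, for $n>0$, $v_q(n)=\max\{k: q^k\mid n\}$; $w_q(n)=\sum_{i=0}^n v_q(i)$. The natural density of $T\subseteq\mathbb{N}$ is $\lim_{N\to\infty}|\{n\in T: 0\leq n<N\}|/N$. *)

theory Defs
  imports "HOL-Analysis.Analysis" "HOL-Number_Theory.Cong"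
begin

definition vq :: "nat \<Rightarrow> nat \<Rightarrow> nat" where
  "vq q n = (if n = 0 then 0 else (GREATEST k. q ^ k dvd n))"

definition wq :: "nat \<Rightarrow> nat \<Rightarrow> nat" where
  "wq q n = (\<Sum>i = 0..n. vq q i)"

definition has_natural_density :: "nat set \<Rightarrow> real \<Rightarrow> bool" where
  "has_natural_density T \<delta> \<longleftrightarrow>
     ((\<lambda>N. real (card {n \<in> T. n < N}) / real N) \<longlonglongrightarrow> \<delta>)"

end

theory Submission
  imports Defs
begin

(*
  Write e(j) = exp(2 pi i j / d) and h(n) = psi w_q(n) + theta n.  Detecting the congruence
  d | h(n) + x by orthogonality of the d-th roots of unity expresses the counting function as a
  combination of the exponential sums S_t(N) = sum_{n<N} e(t h(n)), so it suffices to find the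
  limit of S_t(N)/N for each t < d.  If d divides both t psi and t theta the summands are 1.
  If d divides t psi but not t theta, S_t(N) is a geometric sum, hence bounded.  Otherwise the
  identities w_q(q^m a + r) = w_q(q^m a) + w_q(r) (r < q^m), w_q(q^m a) = a w_q(q^m) (a < q)
  and w_q(q^(m+1)) = q w_q(q^m) + 1 make S_t(q^m) a product of m geometric sums of length q;
  since h(q^(m+1)) = q h(q^m) + psi, of two consecutive factors at most one can have modulus q,
  so S_t(q^(2M)) is exponentially smaller than q^(2M), and so are all block sums of that
  length.  Summing e(t x) over the t with d | t gcd(psi, theta, d) gives the stated density.
*)

section \<open>The sums w_q\<close>

lemma vq_eq_multiplicity:
  assumes "q \<ge> 2"
  shows "vq q n = multiplicity q n"
proof (cases "n = 0")
  case False
  have "\<not> is_unit q" using assms by simp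
  then have "(GREATEST k. q ^ k dvd n) = multiplicity q n"
    using False by (intro Greatest_equality multiplicity_dvd multiplicity_geI)
  then show ?thesis using False by (simp add: vq_def)
qed (simp add: vq_def)

lemma vq_pow_mult:
  assumes "q \<ge> 2" and "0 < b" "b < q"
  shows "vq q (q ^ m * b) = m"
  using assms by (simp add: vq_eq_multiplicity multiplicity_decomposeI nat_dvd_not_less)

lemma vq_pow_mult_add:
  assumes q: "q \<ge> 2" and i: "0 < i" "i < q ^ m"
  shows "vq q (q ^ m * a + i) = vq q i"
proof (cases "a = 0")
  case False
  have "q ^ multiplicity q i \<le> i"
    using i(1) by (intro dvd_imp_le multiplicity_dvd)
  then have "q ^ multiplicity q i < q ^ m" using i(2) by linarith
  then have "multiplicity q i < m" using q by (simp add: power_strict_increasing_iff)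
  also have "m \<le> multiplicity q (q ^ m * a)"
    using q False by (intro multiplicity_geI) auto
  finally show ?thesis
    using q i False by (simp add: vq_eq_multiplicity multiplicity_sum_lt add.commute)
qed simp

lemma wq_0 [simp]: "wq q 0 = 0"
  by (simp add: wq_def vq_def)

lemma wq_Suc: "wq q (Suc n) = wq q n + vq q (Suc n)"
  by (simp add: wq_def)

lemma wq_pow_mult_add:
  assumes q: "q \<ge> 2" and r: "r < q ^ m"
  shows "wq q (q ^ m * a + r) = wq q (q ^ m * a) + wq q r"
  using r
proof (induction r)
  case 0
  show ?case by simp
next
  case (Suc r)
  then show ?case
    using vq_pow_mult_add[OF q, of "Suc r" m a] by (simp add: wq_Suc)
qed

lemma wq_pow_mult_Suc:
  assumes q: "q \<ge> 2"
  shows "wq q (q ^ m * Suc a) + m = wq q (q ^ m * a) + wq q (q ^ m) + vq q (q ^ m * Suc a)"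
proof -
  have pos: "q ^ m > 0" using q by simp
  have "q ^ m * Suc a = Suc (q ^ m * a + (q ^ m - 1))" using pos by simp
  then have "wq q (q ^ m * Suc a) = wq q (q ^ m * a + (q ^ m - 1)) + vq q (q ^ m * Suc a)"
    by (metis wq_Suc)
  moreover have "wq q (q ^ m) = wq q (q ^ m - 1) + m"
    using wq_Suc[of q "q ^ m - 1"] pos vq_pow_mult[OF q, of 1 m] q by simp
  ultimately show ?thesis
    using wq_pow_mult_add[OF q, of "q ^ m - 1" m a] pos by simp
qed

lemma wq_pow_mult:
  assumes q: "q \<ge> 2" and a: "a < q"
  shows "wq q (q ^ m * a) = a * wq q (q ^ m)"
  using a
proof (induction a)
  case 0
  show ?case by simp
next
  case (Suc a)
  then show ?case
    using wq_pow_mult_Suc[OF q, of m a] vq_pow_mult[OF q, of "Suc a" m] by simp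
qed

lemma wq_pow_Suc:
  assumes q: "q \<ge> 2"
  shows "wq q (q ^ Suc m) = q * wq q (q ^ m) + 1"
proof -
  have "vq q (q ^ m * Suc (q - 1)) = Suc m"
    using vq_pow_mult[OF q, of 1 "Suc m"] q by (simp add: mult.commute)
  then have "wq q (q ^ m * q) = wq q (q ^ m * (q - 1)) + wq q (q ^ m) + 1"
    using wq_pow_mult_Suc[OF q, of m "q - 1"] q by simp
  also have "\<dots> = q * wq q (q ^ m) + 1"
    using wq_pow_mult[OF q, of "q - 1" m] q by (simp add: algebra_simps)
  finally show ?thesis by (simp add: mult.commute)
qed

definition lin_wq :: "nat \<Rightarrow> int \<Rightarrow> int \<Rightarrow> nat \<Rightarrow> int" where
  "lin_wq q \<psi> \<theta> n = \<psi> * int (wq q n) + \<theta> * int n"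

lemma mult_lin_wq: "t * lin_wq q \<psi> \<theta> n = int (wq q n) * (t * \<psi>) + int n * (t * \<theta>)"
  by (simp add: lin_wq_def algebra_simps)

context
  fixes q :: nat and \<psi> \<theta> :: int
  assumes q: "q \<ge> 2"
begin

lemma lin_wq_pow_mult_add:
  "r < q ^ m \<Longrightarrow>
    lin_wq q \<psi> \<theta> (q ^ m * a + r) = lin_wq q \<psi> \<theta> (q ^ m * a) + lin_wq q \<psi> \<theta> r"
  using wq_pow_mult_add[OF q] by (simp add: lin_wq_def algebra_simps)

lemma lin_wq_pow_mult:
  "a < q \<Longrightarrow> lin_wq q \<psi> \<theta> (q ^ m * a) = int a * lin_wq q \<psi> \<theta> (q ^ m)"
  using wq_pow_mult[OF q] by (simp add: lin_wq_def algebra_simps)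

lemma lin_wq_pow_Suc:
  "lin_wq q \<psi> \<theta> (q ^ Suc m) = int q * lin_wq q \<psi> \<theta> (q ^ m) + \<psi>"
  using wq_pow_Suc[OF q, of m] by (simp add: lin_wq_def algebra_simps)

end

section \<open>Roots of unity\<close>

definition root_of_unity :: "nat \<Rightarrow> int \<Rightarrow> complex" where
  "root_of_unity d j = exp (2 * of_real pi * \<i> * of_int j / of_nat d)"

lemma root_of_unity_add: "root_of_unity d (a + b) = root_of_unity d a * root_of_unity d b"
  unfolding root_of_unity_def by (simp add: exp_add[symmetric] add_divide_distrib algebra_simps)

lemma root_of_unity_of_nat_mult: "root_of_unity d (int n * j) = root_of_unity d j ^ n"
  unfolding root_of_unity_def by (simp add: exp_of_nat_mult[symmetric] algebra_simps)

lemma norm_root_of_unity [simp]: "norm (root_of_unity d j) = 1"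
  unfolding root_of_unity_def by (simp add: norm_exp_eq_Re)

lemma root_of_unity_eq_1_iff:
  assumes "d > 0"
  shows "root_of_unity d j = 1 \<longleftrightarrow> int d dvd j"
proof -
  have "root_of_unity d j = 1 \<longleftrightarrow> (\<exists>n::int. real_of_int j = real_of_int (n * int d))"
    unfolding root_of_unity_def exp_eq_1 using assms by (auto simp: Im_divide_Reals field_simps)
  also have "\<dots> \<longleftrightarrow> int d dvd j"
    by (metis dvd_def mult.commute of_int_eq_iff)
  finally show ?thesis .
qed

lemma root_of_unity_mod:
  assumes "d > 0"
  shows "root_of_unity d (j mod int d) = root_of_unity d j"
proof -
  have "root_of_unity d j = root_of_unity d (j mod int d) * root_of_unity d (int d * (j div int d))"
    by (metis root_of_unity_add mod_mult_div_eq)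
  then show ?thesis using root_of_unity_eq_1_iff[OF assms] by simp
qed

lemma root_of_unity_mult_cancel:
  assumes "k > 0"
  shows "root_of_unity (k * g) (int k * j) = root_of_unity g j"
  unfolding root_of_unity_def using assms by (simp add: mult.assoc)

lemma sum_root_of_unity:
  assumes d: "d > 0"
  shows "(\<Sum>t<d. root_of_unity d (int t * y)) = (if int d dvd y then of_nat d else 0)"
proof (cases "int d dvd y")
  case True
  then have "root_of_unity d (int t * y) = 1" for t
    using root_of_unity_eq_1_iff[OF d] by simp
  then show ?thesis using True by simp
next
  case False
  have "root_of_unity d y ^ d = 1"
    using root_of_unity_eq_1_iff[OF d] by (metis dvd_triv_left root_of_unity_of_nat_mult)
  moreover have "root_of_unity d y \<noteq> 1" using False root_of_unity_eq_1_iff[OF d] by simp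
  ultimately show ?thesis using False by (simp add: root_of_unity_of_nat_mult geometric_sum)
qed

lemma sum_root_of_unity_dvd_mult:
  fixes g :: nat
  assumes "g dvd d" and "d > 0"
  shows "(\<Sum>t<d. if d dvd t * g then root_of_unity d (int t * x) else 0)
           = (if int g dvd x then of_nat g else 0)"
proof -
  obtain k where d: "d = k * g" using assms(1) by (metis dvd_def mult.commute)
  have k: "k > 0" and g: "g > 0" using assms(2) d by simp_all
  have "d dvd t * g \<longleftrightarrow> k dvd t" for t
    using g by (simp add: d)
  then have "{t \<in> {..<d}. d dvd t * g} = (\<lambda>s. s * k) ` {..<g}"
    using k by (auto simp: d dvd_def mult.commute)
  then have "(\<Sum>t<d. if d dvd t * g then root_of_unity d (int t * x) else 0)
      = (\<Sum>t\<in>(\<lambda>s. s * k) ` {..<g}. root_of_unity d (int t * x))"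
    by (simp add: sum.inter_filter[symmetric])
  also have "\<dots> = (\<Sum>s<g. root_of_unity (k * g) (int k * (int s * x)))"
    using k by (simp add: sum.reindex inj_on_def d ac_simps)
  also have "\<dots> = (if int g dvd x then of_nat g else 0)"
    using k g by (simp add: root_of_unity_mult_cancel sum_root_of_unity)
  finally show ?thesis .
qed

lemma dvd_mult_both_iff_dvd_mult_gcd:
  fixes a b t :: int
  shows "d dvd t * a \<and> d dvd t * b \<longleftrightarrow> d dvd t * gcd a (gcd b d)"
proof
  assume "d dvd t * a \<and> d dvd t * b"
  then have "d dvd gcd (t * a) (gcd (t * b) (t * d))" by simp
  then show "d dvd t * gcd a (gcd b d)" by (simp add: gcd_mult_left)
next
  assume "d dvd t * gcd a (gcd b d)"
  then show "d dvd t * a \<and> d dvd t * b"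
    by (meson dvd_trans gcd_dvd1 gcd_dvd2 mult_dvd_mono dvd_refl)
qed

lemma norm_geometric_sum_le:
  fixes z :: complex
  assumes "norm z = 1"
  shows "norm (\<Sum>a<q. z ^ a) \<le> q"
  using norm_sum[of "\<lambda>a. z ^ a" "{..<q}"] assms by (simp add: norm_power)

lemma norm_geometric_sum_less:
  fixes z :: complex
  assumes z: "norm z = 1" "z \<noteq> 1" and q: "q \<ge> 2"
  shows "norm (\<Sum>a<q. z ^ a) < q"
proof -
  have "norm (1 + z) \<noteq> norm (1::complex) + norm z"
    using z norm_triangle_eq[of 1 z] by (metis norm_one scaleR_one)
  then have "norm (1 + z) < 2"
    using z norm_triangle_ineq[of 1 z] by simp
  moreover have "norm (\<Sum>a\<in>{2..<q}. z ^ a) \<le> q - 2"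
    using norm_sum[of "\<lambda>a. z ^ a" "{2..<q}"] z q by (simp add: norm_power)
  moreover have "(\<Sum>a<q. z ^ a) = (1 + z) + (\<Sum>a\<in>{2..<q}. z ^ a)"
    using sum.atLeastLessThan_concat[of 0 2 q "\<lambda>a. z ^ a"] q
    by (simp add: lessThan_atLeast0 numeral_2_eq_2)
  then have "norm (\<Sum>a<q. z ^ a) \<le> norm (1 + z) + norm (\<Sum>a\<in>{2..<q}. z ^ a)"
    by (metis norm_triangle_ineq)
  ultimately show ?thesis using q by linarith
qed

definition max_geometric_sum_norm :: "nat \<Rightarrow> nat \<Rightarrow> real" where
  "max_geometric_sum_norm q d = Max ((\<lambda>j. norm (\<Sum>a<q. root_of_unity d j ^ a)) ` {1..<int d})"

lemma norm_geometric_sum_le_max: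
  assumes d: "d > 0" and j: "\<not> int d dvd j"
  shows "norm (\<Sum>a<q. root_of_unity d j ^ a) \<le> max_geometric_sum_norm q d"
proof -
  have "j mod int d \<noteq> 0" "0 \<le> j mod int d" "j mod int d < int d"
    using d j by (simp_all add: dvd_eq_mod_eq_0)
  then have "j mod int d \<in> {1..<int d}" by simp
  then show ?thesis
    unfolding max_geometric_sum_norm_def root_of_unity_mod[OF d, of j, symmetric]
    by (intro Max_ge finite_imageI finite_atLeastLessThan_int imageI)
qed

lemma max_geometric_sum_norm_less:
  assumes q: "q \<ge> 2" and d: "d \<ge> 2"
  shows "max_geometric_sum_norm q d < q"
proof -
  have "max_geometric_sum_norm q d \<in> (\<lambda>j. norm (\<Sum>a<q. root_of_unity d j ^ a)) ` {1..<int d}"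
    unfolding max_geometric_sum_norm_def using d by (intro Max_in) auto
  then obtain j where j: "j \<in> {1..<int d}"
    and bound: "max_geometric_sum_norm q d = norm (\<Sum>a<q. root_of_unity d j ^ a)" by blast
  have "\<not> int d dvd j" using j by (simp add: zdvd_not_zless)
  then have "root_of_unity d j \<noteq> 1" using d by (simp add: root_of_unity_eq_1_iff)
  then show ?thesis unfolding bound by (rule norm_geometric_sum_less[OF norm_root_of_unity _ q])
qed

lemma max_geometric_sum_norm_nonneg:
  assumes "d \<ge> 2"
  shows "max_geometric_sum_norm q d \<ge> 0"
proof -
  have "\<not> int d dvd 1" using assms by simp
  then have "norm (\<Sum>a<q. root_of_unity d 1 ^ a) \<le> max_geometric_sum_norm q d"
    using assms by (intro norm_geometric_sum_le_max) simp_all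
  then show ?thesis using norm_ge_zero order_trans by blast
qed

lemma norm_geometric_sums_mult_le:
  assumes d: "d > 0" and nd: "\<not> int d dvd H0 \<or> \<not> int d dvd H1"
  shows "norm (\<Sum>a<q. root_of_unity d H1 ^ a) * norm (\<Sum>a<q. root_of_unity d H0 ^ a)
           \<le> q * max_geometric_sum_norm q d"
proof (cases "int d dvd H0")
  case True
  then have "norm (\<Sum>a<q. root_of_unity d H1 ^ a) \<le> max_geometric_sum_norm q d"
    using nd by (intro norm_geometric_sum_le_max[OF d]) simp
  with norm_geometric_sum_le[OF norm_root_of_unity] show ?thesis
    by (metis mult.commute mult_mono norm_ge_zero order_trans)
next
  case False
  then have "norm (\<Sum>a<q. root_of_unity d H0 ^ a) \<le> max_geometric_sum_norm q d"
    by (intro norm_geometric_sum_le_max[OF d])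
  with norm_geometric_sum_le[OF norm_root_of_unity] show ?thesis
    by (metis mult_mono norm_ge_zero order_trans)
qed

section \<open>Averages\<close>

lemma sum_lessThan_mult_blocks:
  fixes f :: "nat \<Rightarrow> 'a::comm_monoid_add"
  shows "(\<Sum>n<A * L. f n) = (\<Sum>a<A. \<Sum>r<L. f (a * L + r))"
proof -
  have "(\<Sum>n\<in>{a * L..<a * L + L}. f n) = (\<Sum>r<L. f (a * L + r))" for a
    using sum.shift_bounds_nat_ivl[of f 0 "a * L" L]
    by (simp add: atLeast0LessThan add.commute)
  then show ?thesis by (simp flip: sum.nat_group)
qed

lemma norm_sum_lessThan_le_blocks:
  fixes f :: "nat \<Rightarrow> 'a::real_normed_vector"
  assumes f: "\<And>n. norm (f n) \<le> 1" and L: "L > 0"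
    and blocks: "\<And>a. norm (\<Sum>r<L. f (a * L + r)) \<le> B * real L"
  shows "norm (\<Sum>n<N. f n) \<le> B * real N + real L"
proof -
  define A where "A = N div L"
  have AL: "A * L \<le> N" "N - A * L < L"
    using L by (simp_all add: A_def minus_div_mult_eq_mod)
  have "0 \<le> B * real L" using norm_ge_zero blocks[of 0] by (rule order_trans)
  then have B: "B \<ge> 0" using L by (simp add: zero_le_mult_iff)
  have "(\<Sum>n<N. f n) = (\<Sum>n<A * L. f n) + (\<Sum>n\<in>{A * L..<N}. f n)"
    using sum.atLeastLessThan_concat[of 0 "A * L" N f] AL(1) by (simp add: lessThan_atLeast0)
  then have "(\<Sum>n<N. f n) = (\<Sum>a<A. \<Sum>r<L. f (a * L + r)) + (\<Sum>n\<in>{A * L..<N}. f n)"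
    by (simp only: sum_lessThan_mult_blocks)
  then have "norm (\<Sum>n<N. f n)
      \<le> norm (\<Sum>a<A. \<Sum>r<L. f (a * L + r)) + norm (\<Sum>n\<in>{A * L..<N}. f n)"
    by (simp only: norm_triangle_ineq)
  moreover have "norm (\<Sum>a<A. \<Sum>r<L. f (a * L + r)) \<le> B * real N"
  proof -
    have "norm (\<Sum>a<A. \<Sum>r<L. f (a * L + r)) \<le> real A * (B * real L)"
      using sum_norm_le[of "{..<A}", OF blocks] by simp
    also have "\<dots> = B * real (A * L)" by simp
    also have "\<dots> \<le> B * real N" using AL(1) B by (intro mult_left_mono of_nat_mono)
    finally show ?thesis .
  qed
  moreover have "norm (\<Sum>n\<in>{A * L..<N}. f n) \<le> real L"
    using sum_norm_le[of "{A * L..<N}" f "\<lambda>_. 1"] f AL(2) by simp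
  ultimately show ?thesis by linarith
qed

lemma average_tendsto_zero_by_blocks:
  fixes f :: "nat \<Rightarrow> 'a::real_normed_field"
  assumes f: "\<And>n. norm (f n) \<le> 1"
    and blocks: "\<And>\<epsilon>. \<epsilon> > 0 \<Longrightarrow>
                   \<exists>L>0. \<forall>a. norm (\<Sum>r<L. f (a * L + r)) \<le> \<epsilon> * real L"
  shows "(\<lambda>N. (\<Sum>n<N. f n) / of_nat N) \<longlonglongrightarrow> 0"
proof (rule LIMSEQ_I)
  fix \<epsilon> :: real assume "\<epsilon> > 0"
  then obtain L where L: "L > 0" and "\<forall>a. norm (\<Sum>r<L. f (a * L + r)) \<le> \<epsilon> / 2 * real L"
    using blocks[of "\<epsilon> / 2"] by auto
  then have bound: "norm (\<Sum>n<N. f n) \<le> \<epsilon> / 2 * real N + real L" for N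
    using f by (intro norm_sum_lessThan_le_blocks) auto
  have small: "norm ((\<Sum>n<N. f n) / of_nat N - 0) < \<epsilon>" if N: "real N > 2 * real L / \<epsilon>" for N
  proof -
    have "0 < 2 * real L / \<epsilon>" using L \<open>\<epsilon> > 0\<close> by simp
    then have "N > 0" using N by linarith
    moreover have "real L < \<epsilon> / 2 * real N"
      using N \<open>\<epsilon> > 0\<close> by (simp add: field_simps)
    then have "norm (\<Sum>n<N. f n) < \<epsilon> * real N" using bound[of N] by linarith
    ultimately show ?thesis by (simp add: norm_divide divide_less_eq)
  qed
  obtain no :: nat where no: "real no > 2 * real L / \<epsilon>"
    using reals_Archimedean2 by blast
  show "\<exists>no. \<forall>N\<ge>no. norm ((\<Sum>n<N. f n) / of_nat N - 0) < \<epsilon>"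
  proof (intro exI[of _ no] allI impI small)
    fix N assume "no \<le> N"
    then have "real no \<le> real N" by simp
    with no show "2 * real L / \<epsilon> < real N" by linarith
  qed
qed

lemma bounded_divide_of_nat_tendsto_zero:
  fixes f :: "nat \<Rightarrow> 'a::real_normed_field"
  assumes "\<And>N. norm (f N) \<le> C"
  shows "(\<lambda>N. f N / of_nat N) \<longlonglongrightarrow> 0"
proof (rule tendsto_norm_zero_cancel, rule Lim_null_comparison)
  show "\<forall>\<^sub>F N in sequentially. norm (norm (f N / of_nat N)) \<le> C / real N"
    using assms by (simp add: norm_divide divide_right_mono)
qed (rule lim_const_over_n)

section \<open>Exponential sums and natural density\<close>

definition exp_sum :: "nat \<Rightarrow> (nat \<Rightarrow> int) \<Rightarrow> int \<Rightarrow> nat \<Rightarrow> complex" where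
  "exp_sum d h t N = (\<Sum>n<N. root_of_unity d (t * h n))"

lemma exp_sum_trivial:
  assumes "d > 0" and "\<And>n. int d dvd t * h n"
  shows "exp_sum d h t N = of_nat N"
proof -
  have "root_of_unity d (t * h n) = 1" for n
    using assms by (simp add: root_of_unity_eq_1_iff)
  then show ?thesis by (simp add: exp_sum_def)
qed

lemma card_dvd_eq_exp_sums:
  assumes d: "d > 0"
  shows "(of_nat (card {n. n < N \<and> int d dvd h n + x}) :: complex)
           = (\<Sum>t<d. root_of_unity d (int t * x) * exp_sum d h (int t) N) / of_nat d"
proof -
  have "(of_nat (card {n. n < N \<and> int d dvd h n + x}) :: complex)
      = (\<Sum>n<N. if int d dvd h n + x then 1 else 0)"
    by (simp add: sum.If_cases Int_def conj_commute)
  also have "\<dots> = (\<Sum>n<N. (\<Sum>t<d. root_of_unity d (int t * (h n + x))) / of_nat d)"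
    using d by (intro sum.cong refl) (auto simp: sum_root_of_unity[OF d])
  also have "\<dots> = (\<Sum>t<d. root_of_unity d (int t * x) * exp_sum d h (int t) N) / of_nat d"
    by (simp add: exp_sum_def sum_divide_distrib[symmetric] sum_distrib_left sum.swap[of _ "{..<N}"]
        distrib_left root_of_unity_add mult.commute)
  finally show ?thesis .
qed

lemma has_natural_density_by_exp_sums:
  assumes d: "d > 0"
    and lim: "\<And>t. t < d \<Longrightarrow> (\<lambda>N. exp_sum d h (int t) N / of_nat N) \<longlonglongrightarrow> c t"
    and \<delta>: "(\<Sum>t<d. root_of_unity d (int t * x) * c t) / of_nat d = of_real \<delta>"
  shows "has_natural_density {n. int d dvd h n + x} \<delta>"
proof -
  have "(\<lambda>N. (\<Sum>t<d. root_of_unity d (int t * x) * (exp_sum d h (int t) N / of_nat N)) / of_nat d)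
          \<longlonglongrightarrow> of_real \<delta>"
    unfolding \<delta>[symmetric] using d by (intro tendsto_intros lim) simp_all
  moreover have "complex_of_real (real (card {n \<in> {n. int d dvd h n + x}. n < N}) / real N)
      = (\<Sum>t<d. root_of_unity d (int t * x) * (exp_sum d h (int t) N / of_nat N)) / of_nat d" for N
  proof -
    have "complex_of_real (real (card {n \<in> {n. int d dvd h n + x}. n < N}) / real N)
        = of_nat (card {n. n < N \<and> int d dvd h n + x}) / of_nat N"
      by (simp add: conj_commute)
    also have "\<dots> = (\<Sum>t<d. root_of_unity d (int t * x) * exp_sum d h (int t) N) / of_nat d / of_nat N"
      by (simp only: card_dvd_eq_exp_sums[OF d])
    also have "\<dots> = (\<Sum>t<d. root_of_unity d (int t * x) * (exp_sum d h (int t) N / of_nat N)) / of_nat d"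
      by (simp add: sum_divide_distrib[symmetric] divide_divide_eq_left mult.commute)
    finally show ?thesis .
  qed
  ultimately have "(\<lambda>N. complex_of_real (real (card {n \<in> {n. int d dvd h n + x}. n < N}) / real N))
      \<longlonglongrightarrow> of_real \<delta>"
    by simp
  then show ?thesis
    unfolding has_natural_density_def tendsto_of_real_iff .
qed

context
  fixes q :: nat and \<psi> \<theta> :: int
  assumes q: "q \<ge> 2"
begin

lemma exp_sum_block:
  "(\<Sum>r<q ^ m. root_of_unity d (t * lin_wq q \<psi> \<theta> (q ^ m * a + r)))
     = root_of_unity d (t * lin_wq q \<psi> \<theta> (q ^ m * a)) * exp_sum d (lin_wq q \<psi> \<theta>) t (q ^ m)"
  by (simp add: exp_sum_def sum_distrib_left lin_wq_pow_mult_add[OF q] distrib_left root_of_unity_add)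

lemma exp_sum_pow_Suc:
  "exp_sum d (lin_wq q \<psi> \<theta>) t (q ^ Suc m)
     = (\<Sum>a<q. root_of_unity d (t * lin_wq q \<psi> \<theta> (q ^ m)) ^ a) * exp_sum d (lin_wq q \<psi> \<theta>) t (q ^ m)"
proof -
  have "exp_sum d (lin_wq q \<psi> \<theta>) t (q ^ Suc m)
      = (\<Sum>a<q. \<Sum>r<q ^ m. root_of_unity d (t * lin_wq q \<psi> \<theta> (q ^ m * a + r)))"
    by (simp add: exp_sum_def sum_lessThan_mult_blocks mult.commute)
  also have "\<dots> = (\<Sum>a<q. root_of_unity d (t * lin_wq q \<psi> \<theta> (q ^ m)) ^ a
                      * exp_sum d (lin_wq q \<psi> \<theta>) t (q ^ m))"
  proof (intro sum.cong refl)
    fix a assume "a \<in> {..<q}"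
    then have "t * lin_wq q \<psi> \<theta> (q ^ m * a) = int a * (t * lin_wq q \<psi> \<theta> (q ^ m))"
      by (simp add: lin_wq_pow_mult[OF q])
    then show "(\<Sum>r<q ^ m. root_of_unity d (t * lin_wq q \<psi> \<theta> (q ^ m * a + r)))
        = root_of_unity d (t * lin_wq q \<psi> \<theta> (q ^ m)) ^ a * exp_sum d (lin_wq q \<psi> \<theta>) t (q ^ m)"
      by (simp only: exp_sum_block root_of_unity_of_nat_mult)
  qed
  finally show ?thesis by (simp add: sum_distrib_right)
qed

end

lemma norm_exp_sum_pow_even_le:
  assumes q: "q \<ge> 2" and d: "d \<ge> 2" and nd: "\<not> int d dvd t * \<psi>"
  shows "norm (exp_sum d (lin_wq q \<psi> \<theta>) t (q ^ (2 * M))) \<le> (q * max_geometric_sum_norm q d) ^ M"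
proof (induction M)
  case 0
  show ?case by (simp add: exp_sum_def lin_wq_def)
next
  case (Suc M)
  let ?S = "\<lambda>m. exp_sum d (lin_wq q \<psi> \<theta>) t (q ^ m)"
  let ?G = "\<lambda>H. \<Sum>a<q. root_of_unity d H ^ a"
  define H0 where "H0 = t * lin_wq q \<psi> \<theta> (q ^ (2 * M))"
  define H1 where "H1 = t * lin_wq q \<psi> \<theta> (q ^ Suc (2 * M))"
  have "H1 = int q * H0 + t * \<psi>"
    unfolding H0_def H1_def lin_wq_pow_Suc[OF q] by (simp add: algebra_simps)
  then have "\<not> int d dvd H0 \<or> \<not> int d dvd H1"
    using nd by (metis dvd_add_right_iff dvd_mult)
  then have factors: "norm (?G H1) * norm (?G H0) \<le> q * max_geometric_sum_norm q d"
    using d by (intro norm_geometric_sums_mult_le) simp_all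
  have "?S (2 * Suc M) = ?G H1 * (?G H0 * ?S (2 * M))"
    unfolding H0_def H1_def by (simp only: mult_Suc_right add_2_eq_Suc exp_sum_pow_Suc[OF q])
  then have "norm (?S (2 * Suc M)) = norm (?G H1) * norm (?G H0) * norm (?S (2 * M))"
    by (simp only: norm_mult mult.assoc)
  also have "\<dots> \<le> (q * max_geometric_sum_norm q d) * (q * max_geometric_sum_norm q d) ^ M"
    using max_geometric_sum_norm_nonneg[OF d, of q] by (intro mult_mono[OF factors Suc.IH]) simp_all
  finally show ?case by simp
qed

lemma exp_sum_lin_wq_average_linear:
  assumes d: "d > 0" and \<psi>: "int d dvd t * \<psi>" and \<theta>: "\<not> int d dvd t * \<theta>"
  shows "(\<lambda>N. exp_sum d (lin_wq q \<psi> \<theta>) t N / of_nat N) \<longlonglongrightarrow> 0"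
proof (rule bounded_divide_of_nat_tendsto_zero)
  define z where "z = root_of_unity d (t * \<theta>)"
  have z: "z \<noteq> 1" "norm z = 1" using \<theta> by (simp_all add: z_def root_of_unity_eq_1_iff[OF d])
  have "root_of_unity d (t * \<psi>) = 1" using \<psi> by (simp add: root_of_unity_eq_1_iff[OF d])
  then have "root_of_unity d (t * lin_wq q \<psi> \<theta> n) = z ^ n" for n
    by (simp add: mult_lin_wq z_def root_of_unity_add root_of_unity_of_nat_mult)
  then have "exp_sum d (lin_wq q \<psi> \<theta>) t N = (z ^ N - 1) / (z - 1)" for N
    using z by (simp add: exp_sum_def geometric_sum)
  moreover have "norm (z ^ N - 1) \<le> 2" for N
    using norm_triangle_ineq4[of "z ^ N" 1] z by (simp add: norm_power)
  ultimately show "norm (exp_sum d (lin_wq q \<psi> \<theta>) t N) \<le> 2 / norm (z - 1)" for N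
    using z by (simp add: norm_divide divide_right_mono)
qed

lemma exp_sum_lin_wq_average_nondegenerate:
  assumes q: "q \<ge> 2" and d: "d \<ge> 2" and nd: "\<not> int d dvd t * \<psi>"
  shows "(\<lambda>N. exp_sum d (lin_wq q \<psi> \<theta>) t N / of_nat N) \<longlonglongrightarrow> 0"
  unfolding exp_sum_def
proof (rule average_tendsto_zero_by_blocks)
  fix \<epsilon> :: real assume "\<epsilon> > 0"
  define \<rho> where "\<rho> = max_geometric_sum_norm q d / q"
  have "0 \<le> \<rho>" "\<rho> < 1"
    using max_geometric_sum_norm_nonneg[OF d] max_geometric_sum_norm_less[OF q d] q by (simp_all add: \<rho>_def)
  then obtain M where M: "\<rho> ^ M < \<epsilon>" using real_arch_pow_inv \<open>\<epsilon> > 0\<close> by blast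
  define L where "L = q ^ (2 * M)"
  have "norm (\<Sum>r<L. root_of_unity d (t * lin_wq q \<psi> \<theta> (a * L + r))) \<le> \<epsilon> * real L" for a
  proof -
    have "norm (\<Sum>r<L. root_of_unity d (t * lin_wq q \<psi> \<theta> (a * L + r)))
        = norm (exp_sum d (lin_wq q \<psi> \<theta>) t L)"
      using exp_sum_block[OF q, of d t \<psi> \<theta> "2 * M" a] by (simp add: L_def norm_mult mult.commute)
    also have "\<dots> \<le> (q * max_geometric_sum_norm q d) ^ M"
      unfolding L_def by (rule norm_exp_sum_pow_even_le[OF q d nd])
    also have "\<dots> = real L * \<rho> ^ M"
      using q by (simp add: L_def \<rho>_def power_mult power_mult_distrib power_divide power2_eq_square)
    also have "\<dots> \<le> real L * \<epsilon>" using M by (intro mult_left_mono) auto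
    finally show ?thesis by (simp only: mult.commute)
  qed
  moreover have "L > 0" using q by (simp add: L_def)
  ultimately show "\<exists>L>0. \<forall>a.
      norm (\<Sum>r<L. root_of_unity d (t * lin_wq q \<psi> \<theta> (a * L + r))) \<le> \<epsilon> * real L"
    by blast
qed simp

lemma exp_sum_lin_wq_average:
  assumes q: "q \<ge> 2" and d: "d \<ge> 2"
  shows "(\<lambda>N. exp_sum d (lin_wq q \<psi> \<theta>) t N / of_nat N)
           \<longlonglongrightarrow> (if int d dvd t * \<psi> \<and> int d dvd t * \<theta> then 1 else 0)"
proof (cases "int d dvd t * \<psi> \<and> int d dvd t * \<theta>")
  case True
  then have "int d dvd t * lin_wq q \<psi> \<theta> n" for n
    unfolding mult_lin_wq by (simp add: dvd_add dvd_mult)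
  then have "\<forall>\<^sub>F N in sequentially. exp_sum d (lin_wq q \<psi> \<theta>) t N / of_nat N = 1"
    using d by (auto simp: exp_sum_trivial eventually_sequentially intro!: exI[of _ 1])
  then show ?thesis using True by (simp add: tendsto_eventually)
next
  case False
  then have "(\<lambda>N. exp_sum d (lin_wq q \<psi> \<theta>) t N / of_nat N) \<longlonglongrightarrow> 0"
    using d exp_sum_lin_wq_average_linear[of d t \<psi> \<theta>]
      exp_sum_lin_wq_average_nondegenerate[OF q d, of t \<psi> \<theta>]
    by (cases "int d dvd t * \<psi>") simp_all
  then show ?thesis by (simp only: if_not_P[OF False])
qed

lemma has_natural_density_lin_wq:
  assumes q: "q \<ge> 2" and d: "d \<ge> 2" and g: "int g = gcd \<psi> (gcd \<theta> (int d))"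
  shows "has_natural_density {n. int d dvd lin_wq q \<psi> \<theta> n + x}
           (if int g dvd x then real g / real d else 0)"
proof (rule has_natural_density_by_exp_sums)
  have "int g dvd int d" unfolding g by (meson dvd_trans gcd_dvd2)
  then have g_dvd: "g dvd d" by simp
  show "(\<lambda>N. exp_sum d (lin_wq q \<psi> \<theta>) (int t) N / of_nat N)
          \<longlonglongrightarrow> (if d dvd t * g then 1 else 0)" for t
    using exp_sum_lin_wq_average[OF q d, of \<psi> \<theta> "int t"]
    by (simp add: dvd_mult_both_iff_dvd_mult_gcd g flip: int_dvd_int_iff)
  show "(\<Sum>t<d. root_of_unity d (int t * x) * (if d dvd t * g then 1 else 0)) / of_nat d
          = of_real (if int g dvd x then real g / real d else 0)"
    using sum_root_of_unity_dvd_mult[OF g_dvd, of x] d by (simp add: if_distrib cong: if_cong)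
qed (use d in simp)

theorem theorem3p2:
  fixes q d :: nat and \<psi> \<theta> x :: int
  assumes "q \<ge> 2" and "d \<ge> 2" and "\<psi> \<noteq> 0"
  shows "has_natural_density
           {n. [\<psi> * int (wq q n) + \<theta> * int n + x = 0] (mod int d)}
           (if gcd \<psi> (gcd \<theta> (int d)) dvd gcd x (int d)
            then real_of_int (gcd \<psi> (gcd \<theta> (int d))) / real d
            else 0)"
proof -
  define g where "g = nat (gcd \<psi> (gcd \<theta> (int d)))"
  have g: "int g = gcd \<psi> (gcd \<theta> (int d))" by (simp add: g_def)
  have set: "{n. [\<psi> * int (wq q n) + \<theta> * int n + x = 0] (mod int d)}
      = {n. int d dvd lin_wq q \<psi> \<theta> n + x}"
    by (simp add: cong_0_iff lin_wq_def)
  have dvd_gcd: "int g dvd gcd x (int d) \<longleftrightarrow> int g dvd x"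
    unfolding g by (meson dvd_trans gcd_dvd1 gcd_dvd2 gcd_greatest)
  show ?thesis
    unfolding g[symmetric] set dvd_gcd of_int_of_nat_eq by (rule has_natural_density_lin_wq[OF assms(1,2) g])
qed

end
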